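(* Assume the standing setting. Let $S$ be a subset of $U$ containing at most one end of $e_1$ (or a subset of $W$ containing at most one end of $e_2$), and let $S'\subseteq V(G)$ satisfy $N_G(S)\subseteq S'$ and $|S'|\ge 2$. Then $|S'|\ge |S|+2$.
   Context: Graphs may have multiple edges but no loops. An edge is admissible if it lies in some perfect matching; a connected graph with at least two vertices is matching covered if every edge is admissible; an edge $e$ of a matching covered graph $G$ is removable if $G-e$ is matching covered. A brick is a 3-connected nonbipartite graph $G$ such that $G-x-y$ has a perfect matching for all distinct $x,y$. A nonbipartite matching covered graph $G$ is near-bipartite if it has a pair of edges $\{e_1,e_2\}$ (a removable doubleton) such that $G-\{e_1,e_2\}$ is bipartite matching covered. $N_G(X)$ is the set of vertices outside $X$ with a neighbour in $X$. Standing setting: $G$ is a near-bipartite brick with removable doubleton $\{e_1,e_2\}$, $H=G-\{e_1,e_2\}$, and $(U,W)$ is the bipartition of $H$, labelled so that both ends of $e_1$ lie in $U$ and both ends of $e_2$ lie in $W$ (so $e_1$ is the only edge of $G$ with both ends in $U$ and $e_2$ the only edge with both ends in $W$). *)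

theory Defs
  imports Main
begin

text \<open>Parallel edges are allowed since distinct edges may have the same ends.\<close>

definition multigraph :: "'a set \<Rightarrow> 'e set \<Rightarrow> ('e \<Rightarrow> 'a set) \<Rightarrow> bool" where
  "multigraph V E ends \<longleftrightarrow> finite V \<and> finite E \<and>
     (\<forall>e\<in>E. ends e \<subseteq> V \<and> card (ends e) = 2)"

definition perfect_matching :: "'a set \<Rightarrow> 'e set \<Rightarrow> ('e \<Rightarrow> 'a set) \<Rightarrow> 'e set \<Rightarrow> bool" where
  "perfect_matching V E ends M \<longleftrightarrow> M \<subseteq> E \<and> (\<forall>v\<in>V. \<exists>!e. e \<in> M \<and> v \<in> ends e)"

definition has_perfect_matching :: "'a set \<Rightarrow> 'e set \<Rightarrow> ('e \<Rightarrow> 'a set) \<Rightarrow> bool" where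
  "has_perfect_matching V E ends \<longleftrightarrow> (\<exists>M. perfect_matching V E ends M)"

definition admissible :: "'a set \<Rightarrow> 'e set \<Rightarrow> ('e \<Rightarrow> 'a set) \<Rightarrow> 'e \<Rightarrow> bool" where
  "admissible V E ends e \<longleftrightarrow> (\<exists>M. perfect_matching V E ends M \<and> e \<in> M)"

definition adj :: "'e set \<Rightarrow> ('e \<Rightarrow> 'a set) \<Rightarrow> 'a \<Rightarrow> 'a \<Rightarrow> bool" where
  "adj E ends u v \<longleftrightarrow> u \<noteq> v \<and> (\<exists>e\<in>E. ends e = {u, v})"

definition connected_graph :: "'a set \<Rightarrow> 'e set \<Rightarrow> ('e \<Rightarrow> 'a set) \<Rightarrow> bool" where
  "connected_graph V E ends \<longleftrightarrow> V \<noteq> {} \<and>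
     (\<forall>u\<in>V. \<forall>v\<in>V. (u, v) \<in> ({(x, y). x \<in> V \<and> y \<in> V \<and> adj E ends x y})\<^sup>*)"

definition matching_covered :: "'a set \<Rightarrow> 'e set \<Rightarrow> ('e \<Rightarrow> 'a set) \<Rightarrow> bool" where
  "matching_covered V E ends \<longleftrightarrow> connected_graph V E ends \<and> card V \<ge> 2 \<and>
     (\<forall>e\<in>E. admissible V E ends e)"

definition bipartition :: "'a set \<Rightarrow> 'e set \<Rightarrow> ('e \<Rightarrow> 'a set) \<Rightarrow> 'a set \<Rightarrow> 'a set \<Rightarrow> bool" where
  "bipartition V E ends U W \<longleftrightarrow> U \<union> W = V \<and> U \<inter> W = {} \<and>
     (\<forall>e\<in>E. card (ends e \<inter> U) = 1 \<and> card (ends e \<inter> W) = 1)"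

definition bipartite :: "'a set \<Rightarrow> 'e set \<Rightarrow> ('e \<Rightarrow> 'a set) \<Rightarrow> bool" where
  "bipartite V E ends \<longleftrightarrow> (\<exists>U W. bipartition V E ends U W)"

text \<open>Vertex deletion G - X: remove X and all edges incident with X.\<close>
definition del_edges_at :: "'e set \<Rightarrow> ('e \<Rightarrow> 'a set) \<Rightarrow> 'a set \<Rightarrow> 'e set" where
  "del_edges_at E ends X = {e \<in> E. ends e \<inter> X = {}}"

definition k_connected :: "nat \<Rightarrow> 'a set \<Rightarrow> 'e set \<Rightarrow> ('e \<Rightarrow> 'a set) \<Rightarrow> bool" where
  "k_connected k V E ends \<longleftrightarrow> card V > k \<and>
     (\<forall>X. X \<subseteq> V \<and> card X < k \<longrightarrow> connected_graph (V - X) (del_edges_at E ends X) ends)"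

definition brick :: "'a set \<Rightarrow> 'e set \<Rightarrow> ('e \<Rightarrow> 'a set) \<Rightarrow> bool" where
  "brick V E ends \<longleftrightarrow> k_connected 3 V E ends \<and> \<not> bipartite V E ends \<and>
     (\<forall>x\<in>V. \<forall>y\<in>V. x \<noteq> y \<longrightarrow>
        has_perfect_matching (V - {x, y}) (del_edges_at E ends {x, y}) ends)"

definition removable_doubleton :: "'a set \<Rightarrow> 'e set \<Rightarrow> ('e \<Rightarrow> 'a set) \<Rightarrow> 'e \<Rightarrow> 'e \<Rightarrow> bool" where
  "removable_doubleton V E ends e1 e2 \<longleftrightarrow> e1 \<in> E \<and> e2 \<in> E \<and> e1 \<noteq> e2 \<and>
     bipartite V (E - {e1, e2}) ends \<and> matching_covered V (E - {e1, e2}) ends"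

definition near_bipartite :: "'a set \<Rightarrow> 'e set \<Rightarrow> ('e \<Rightarrow> 'a set) \<Rightarrow> bool" where
  "near_bipartite V E ends \<longleftrightarrow> matching_covered V E ends \<and> \<not> bipartite V E ends \<and>
     (\<exists>e1 e2. removable_doubleton V E ends e1 e2)"

definition nbhd :: "'a set \<Rightarrow> 'e set \<Rightarrow> ('e \<Rightarrow> 'a set) \<Rightarrow> 'a set \<Rightarrow> 'a set" where
  "nbhd V E ends X = {v \<in> V - X. \<exists>u\<in>X. adj E ends u v}"

end

theory Submission
  imports Defs
begin

text \<open>S is independent: it lies on one side of the bipartite graph G - e1 - e2 and does
  not contain both ends of e1 or e2. Hence a perfect matching of G - x - y matches S
  injectively into N(S) - {x, y}. If S' - S contains two vertices x, y this gives
  |S| \<le> |S'| - 2. Otherwise N(S) \<subseteq> S' - S is contained in some {t}, and a perfect matching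
  of G - t - z, for a third vertex z, matches a vertex of S to a neighbour outside {t, z},
  which is impossible unless S is empty.\<close>

definition independent_set :: "'e set \<Rightarrow> ('e \<Rightarrow> 'a set) \<Rightarrow> 'a set \<Rightarrow> bool" where
  "independent_set E ends S \<longleftrightarrow> (\<forall>e\<in>E. \<not> ends e \<subseteq> S)"

lemma bipartition_side_independent:
  assumes "bipartition V E ends U W" and "S \<subseteq> U \<or> S \<subseteq> W"
  shows "independent_set E ends S"
  unfolding independent_set_def
proof (intro ballI notI)
  fix e assume "e \<in> E" and "ends e \<subseteq> S"
  have "card (ends e \<inter> U) = 1" "card (ends e \<inter> W) = 1" and disj: "U \<inter> W = {}"
    using assms(1) \<open>e \<in> E\<close> unfolding bipartition_def by auto
  then have "ends e \<inter> U \<noteq> {}" "ends e \<inter> W \<noteq> {}" by auto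
  with \<open>ends e \<subseteq> S\<close> assms(2) disj show False by blast
qed

lemma multigraph_matching_partner:
  assumes "multigraph V E ends"
    and "perfect_matching (V - X) (del_edges_at E ends X) ends M"
    and "s \<in> V - X"
  shows "\<exists>w e. e \<in> M \<and> e \<in> E \<and> ends e = {s, w} \<and> w \<noteq> s \<and> w \<in> V - X"
proof -
  from assms(2,3) obtain e where e: "e \<in> M" "s \<in> ends e"
    unfolding perfect_matching_def by blast
  with assms(2) have eE: "e \<in> E" and disj: "ends e \<inter> X = {}"
    unfolding perfect_matching_def del_edges_at_def by auto
  with assms(1) have "card (ends e) = 2" and "ends e \<subseteq> V"
    unfolding multigraph_def by simp_all
  then obtain a b where ab: "ends e = {a, b}" "a \<noteq> b"
    unfolding card_2_iff by blast
  define w where "w = (if s = a then b else a)"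
  have "ends e = {s, w}" "w \<noteq> s"
    using ab e(2) unfolding w_def by auto
  with e eE disj \<open>ends e \<subseteq> V\<close> show ?thesis by blast
qed

text \<open>Matching partners give an injection of S - X into N(S) - X.\<close>

lemma independent_card_le_nbhd:
  assumes mg: "multigraph V E ends" and "independent_set E ends S" and "S \<subseteq> V"
    and pm: "perfect_matching (V - X) (del_edges_at E ends X) ends M"
  shows "card (S - X) \<le> card (nbhd V E ends S - X)"
proof -
  have "\<forall>s\<in>S - X. \<exists>w e. e \<in> M \<and> e \<in> E \<and> ends e = {s, w} \<and> w \<noteq> s \<and> w \<in> V - X"
    using multigraph_matching_partner[OF mg pm] \<open>S \<subseteq> V\<close> by blast
  then obtain partner where partner: "\<And>s. s \<in> S - X \<Longrightarrow>
      \<exists>e. e \<in> M \<and> e \<in> E \<and> ends e = {s, partner s} \<and> partner s \<noteq> s \<and> partner s \<in> V - X"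
    by (metis bchoice)
  have "inj_on partner (S - X)"
  proof
    fix s1 s2 assume s: "s1 \<in> S - X" "s2 \<in> S - X" "partner s1 = partner s2"
    obtain a where a: "a \<in> M" "ends a = {s1, partner s1}" "partner s1 \<noteq> s1" "partner s1 \<in> V - X"
      using partner[OF s(1)] by blast
    obtain b where b: "b \<in> M" "ends b = {s2, partner s1}"
      using partner[OF s(2)] s(3) by auto
    have "a = b"
      using pm a b unfolding perfect_matching_def by blast
    with a(2,3) b(2) show "s1 = s2" by (auto simp: doubleton_eq_iff)
  qed
  moreover have "partner ` (S - X) \<subseteq> nbhd V E ends S - X"
  proof
    fix w assume "w \<in> partner ` (S - X)"
    then obtain s e where s: "s \<in> S - X" "w = partner s"
      and e: "e \<in> E" "ends e = {s, w}" "w \<noteq> s" "w \<in> V - X"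
      using partner by blast
    have "w \<notin> S" using \<open>independent_set E ends S\<close> e(1,2) s(1)
      unfolding independent_set_def by auto
    moreover have "adj E ends s w" unfolding adj_def using e by auto
    ultimately show "w \<in> nbhd V E ends S - X"
      using s(1) e(4) unfolding nbhd_def by auto
  qed
  moreover have "finite (nbhd V E ends S - X)"
    using mg unfolding multigraph_def nbhd_def by simp
  ultimately show ?thesis by (rule card_inj_on_le)
qed

lemma brick_card_gt_3: "brick V E ends \<Longrightarrow> card V > 3"
  unfolding brick_def k_connected_def by simp

lemma brick_perfect_matching_delete_two:
  assumes "brick V E ends" and "x \<in> V" "y \<in> V" "x \<noteq> y"
  obtains M where "perfect_matching (V - {x, y}) (del_edges_at E ends {x, y}) ends M"
proof -
  have "has_perfect_matching (V - {x, y}) (del_edges_at E ends {x, y}) ends"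
    using assms unfolding brick_def by simp
  then show ?thesis using that unfolding has_perfect_matching_def by auto
qed

lemma brick_independent_card_le_nbhd_minus_two:
  assumes "multigraph V E ends" "brick V E ends" "independent_set E ends S" "S \<subseteq> V"
    and "x \<in> V - S" "y \<in> V - S" "x \<noteq> y"
  shows "card S \<le> card (nbhd V E ends S - {x, y})"
proof -
  have "x \<in> V" "y \<in> V" and "S - {x, y} = S" using assms(5,6) by auto
  then obtain M where "perfect_matching (V - {x, y}) (del_edges_at E ends {x, y}) ends M"
    using brick_perfect_matching_delete_two[OF assms(2) _ _ assms(7)] by metis
  from independent_card_le_nbhd[OF assms(1,3,4) this] \<open>S - {x, y} = S\<close>
  show ?thesis by simp
qed

lemma brick_independent_card_nbhd_ge_2:
  assumes mg: "multigraph V E ends" and br: "brick V E ends"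
    and ind: "independent_set E ends S" and "S \<subseteq> V" and "s \<in> S"
  shows "card (nbhd V E ends S) \<ge> 2"
proof (rule ccontr)
  assume "\<not> ?thesis"
  moreover have "finite (nbhd V E ends S)"
    using mg unfolding multigraph_def nbhd_def by simp
  ultimately have small: "card (nbhd V E ends S) \<le> Suc 0" by simp
  have card_V: "card V > 3" using brick_card_gt_3[OF br] .
  have not_sub: "\<not> V \<subseteq> A" if "card A \<le> 2" "finite A" for A :: "'a set"
  proof
    assume "V \<subseteq> A"
    with \<open>finite A\<close> have "card V \<le> card A" by (rule card_mono)
    with that(1) card_V show False by linarith
  qed
  obtain t where t: "t \<in> V - {s}" "nbhd V E ends S \<subseteq> {t}"
  proof (cases "nbhd V E ends S = {}")
    case True
    then show ?thesis using not_sub[of "{s}"] that by auto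
  next
    case False
    then obtain t where "t \<in> nbhd V E ends S" by blast
    with small \<open>finite (nbhd V E ends S)\<close> have "nbhd V E ends S \<subseteq> {t}"
      by (auto simp: card_le_Suc0_iff_eq)
    moreover have "t \<in> V - {s}" using \<open>t \<in> nbhd V E ends S\<close> \<open>s \<in> S\<close> unfolding nbhd_def by blast
    ultimately show ?thesis using that by blast
  qed
  have "\<not> V \<subseteq> {s, t}" using not_sub[of "{s, t}"] by (simp add: card_insert_if)
  then obtain z where z: "z \<in> V" "z \<noteq> s" "z \<noteq> t" by blast
  have "t \<in> V" "t \<noteq> z" using t z by auto
  then obtain M where "perfect_matching (V - {t, z}) (del_edges_at E ends {t, z}) ends M"
    using brick_perfect_matching_delete_two[OF br _ z(1)] by metis
  from independent_card_le_nbhd[OF mg ind \<open>S \<subseteq> V\<close> this]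
  have "card (S - {t, z}) \<le> card (nbhd V E ends S - {t, z})" .
  moreover have "nbhd V E ends S - {t, z} = {}" using t(2) by blast
  moreover have "s \<in> S - {t, z}" and "finite (S - {t, z})"
    using \<open>s \<in> S\<close> \<open>S \<subseteq> V\<close> t z mg unfolding multigraph_def by (auto intro: finite_subset)
  ultimately have "S - {t, z} = {}" by simp
  with \<open>s \<in> S - {t, z}\<close> show False by blast
qed

lemma edge_not_within_side_set:
  assumes "card (ends e) = 2" and "ends e \<subseteq> U" and "U \<inter> W = {}"
    and "(S \<subseteq> U \<and> card (S \<inter> ends e) \<le> 1) \<or> S \<subseteq> W"
  shows "\<not> ends e \<subseteq> S"
proof
  assume "ends e \<subseteq> S"
  then have "card (S \<inter> ends e) = 2" using assms(1) by (simp add: Int_absorb1)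
  with assms(4) have "S \<subseteq> W" by auto
  with \<open>ends e \<subseteq> S\<close> assms(2,3) have "ends e = {}" by blast
  with assms(1) show False by simp
qed

lemma doubleton_side_set_independent:
  assumes "multigraph V E ends"
    and "bipartition V (E - {e1, e2}) ends U W"
    and "ends e1 \<subseteq> U" and "ends e2 \<subseteq> W"
    and "(S \<subseteq> U \<and> card (S \<inter> ends e1) \<le> 1) \<or> (S \<subseteq> W \<and> card (S \<inter> ends e2) \<le> 1)"
    and "e1 \<in> E" "e2 \<in> E"
  shows "independent_set E ends S"
proof -
  have H: "independent_set (E - {e1, e2}) ends S"
    using bipartition_side_independent[OF assms(2)] assms(5) by blast
  have "card (ends e1) = 2" "card (ends e2) = 2"
    using assms(1,6,7) unfolding multigraph_def by auto
  moreover have "U \<inter> W = {}" using assms(2) unfolding bipartition_def by blast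
  ultimately have "\<not> ends e1 \<subseteq> S" "\<not> ends e2 \<subseteq> S"
    using edge_not_within_side_set[of ends e1 U W S] edge_not_within_side_set[of ends e2 W U S] assms(3-5)
    by auto
  with H show ?thesis unfolding independent_set_def by blast
qed

theorem mainTheorem5:
  fixes V :: "'a set" and E :: "'e set" and ends :: "'e \<Rightarrow> 'a set"
    and e1 e2 :: 'e and U W S S' :: "'a set"
  assumes "multigraph V E ends"
    and "brick V E ends"
    and "near_bipartite V E ends"
    and "removable_doubleton V E ends e1 e2"
    and "bipartition V (E - {e1, e2}) ends U W"
    and "ends e1 \<subseteq> U" and "ends e2 \<subseteq> W"
    and "(S \<subseteq> U \<and> card (S \<inter> ends e1) \<le> 1) \<or> (S \<subseteq> W \<and> card (S \<inter> ends e2) \<le> 1)"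
    and "S' \<subseteq> V" and "nbhd V E ends S \<subseteq> S'" and "card S' \<ge> 2"
  shows "card S' \<ge> card S + 2"
proof -
  have "e1 \<in> E" "e2 \<in> E" using assms(4) unfolding removable_doubleton_def by auto
  with assms(1,5-8) have ind: "independent_set E ends S"
    by (rule doubleton_side_set_independent)
  have SV: "S \<subseteq> V" using assms(5,8) unfolding bipartition_def by blast
  have fin: "finite S'" using assms(1,9) unfolding multigraph_def by (auto intro: finite_subset)
  have nbhd_sub: "nbhd V E ends S \<subseteq> S' - S" using assms(10) unfolding nbhd_def by blast
  show ?thesis
  proof (cases "\<exists>x\<in>S' - S. \<exists>y\<in>S' - S. x \<noteq> y")
    case True
    then obtain x y where xy: "x \<in> S' - S" "y \<in> S' - S" "x \<noteq> y" by blast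
    with assms(9) have "card S \<le> card (nbhd V E ends S - {x, y})"
      by (intro brick_independent_card_le_nbhd_minus_two[OF assms(1,2) ind SV]) auto
    also have "\<dots> \<le> card (S' - {x, y})"
      using nbhd_sub fin by (intro card_mono) auto
    also have "\<dots> = card S' - 2" using xy by (simp add: card_Diff_subset)
    finally show ?thesis using assms(11) by linarith
  next
    case False
    with fin have "card (S' - S) \<le> Suc 0" by (simp add: card_le_Suc0_iff_eq)
    moreover have "card (nbhd V E ends S) \<le> card (S' - S)"
      using fin nbhd_sub by (intro card_mono) auto
    ultimately have "\<not> card (nbhd V E ends S) \<ge> 2" by linarith
    then have "S = {}"
      using brick_independent_card_nbhd_ge_2[OF assms(1,2) ind SV] by blast
    with assms(11) show ?thesis by simp
  qed
qed

end
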